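(* Let $n\ge0$ and $m\ge n+2$. Then $L_n^{n+1}=L_n^m$, i.e. for every set of formulas $\Gamma$ and formula $\alpha$, $\Gamma\vdash_{L_n^{n+1}}\alpha$ iff $\Gamma\vdash_{L_n^m}\alpha$.
   Context: Formulas are built from a countable set of propositional variables using unary $\neg,\circ$ and binary $\land,\lor,\to$; $\circ^0\alpha=\alpha$, $\circ^{m+1}\alpha=\circ(\circ^m\alpha)$, $\alpha\leftrightarrow\beta:=(\alpha\to\beta)\land(\beta\to\alpha)$. mbC is the Hilbert calculus with the axiom schemas of a standard axiomatization of positive classical propositional logic in $\land,\lor,\to$, plus (TND) $\alpha\lor\neg\alpha$ and (bc1) $\circ\alpha\to(\alpha\to(\neg\alpha\to\beta))$, modus ponens being the only rule; mbCciw is mbC plus (ciw) $\circ\alpha\lor(\alpha\land\neg\alpha)$. For $n\ge0$, $k\ge1$, $L_n^k$ is mbCciw plus (cc$^n$) $\circ^{n+2}\alpha$, (dn) $\neg\neg\alpha\leftrightarrow\alpha$, and (ip$^j$) $\neg\circ^j\neg\alpha\leftrightarrow\neg\circ^j\alpha$ for each $1\le j<k$. $\Gamma\vdash_L\alpha$ denotes derivability of $\alpha$ from $\Gamma$ in $L$. *)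

theory Defs
  imports Main
begin

datatype fm =
    Var nat
  | Neg fm
  | Circ fm
  | Conj fm fm
  | Disj fm fm
  | Imp fm fm

definition Iff :: "fm \<Rightarrow> fm \<Rightarrow> fm" where
  "Iff a b = Conj (Imp a b) (Imp b a)"

primrec circ_pow :: "nat \<Rightarrow> fm \<Rightarrow> fm" where
  "circ_pow 0 a = a"
| "circ_pow (Suc m) a = Circ (circ_pow m a)"

inductive pos_ax :: "fm \<Rightarrow> bool" where
  Ax1: "pos_ax (Imp a (Imp b a))"
| Ax2: "pos_ax (Imp (Imp a b) (Imp (Imp a (Imp b c)) (Imp a c)))"
| Ax3: "pos_ax (Imp a (Imp b (Conj a b)))"
| Ax4: "pos_ax (Imp (Conj a b) a)"
| Ax5: "pos_ax (Imp (Conj a b) b)"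
| Ax6: "pos_ax (Imp a (Disj a b))"
| Ax7: "pos_ax (Imp b (Disj a b))"
| Ax8: "pos_ax (Imp (Imp a c) (Imp (Imp b c) (Imp (Disj a b) c)))"
| Ax9: "pos_ax (Disj a (Imp a b))"

inductive mbCciw_ax :: "fm \<Rightarrow> bool" where
  pos: "pos_ax a \<Longrightarrow> mbCciw_ax a"
| TND: "mbCciw_ax (Disj a (Neg a))"
| bc1: "mbCciw_ax (Imp (Circ a) (Imp a (Imp (Neg a) b)))"
| ciw: "mbCciw_ax (Disj (Circ a) (Conj a (Neg a)))"

inductive L_ax :: "nat \<Rightarrow> nat \<Rightarrow> fm \<Rightarrow> bool" where
  base: "mbCciw_ax a \<Longrightarrow> L_ax n k a"
| cc: "L_ax n k (circ_pow (n + 2) a)"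
| dn: "L_ax n k (Iff (Neg (Neg a)) a)"
| ip: "1 \<le> j \<Longrightarrow> j < k \<Longrightarrow>
        L_ax n k (Iff (Neg (circ_pow j (Neg a))) (Neg (circ_pow j a)))"

inductive derives :: "nat \<Rightarrow> nat \<Rightarrow> fm set \<Rightarrow> fm \<Rightarrow> bool" where
  hyp: "a \<in> \<Gamma> \<Longrightarrow> derives n k \<Gamma> a"
| ax: "L_ax n k a \<Longrightarrow> derives n k \<Gamma> a"
| mp: "derives n k \<Gamma> a \<Longrightarrow> derives n k \<Gamma> (Imp a b) \<Longrightarrow> derives n k \<Gamma> b"

end

theory Submission
  imports Defs
begin

text \<open>Every axiom of \<open>L_n^m\<close> is derivable in \<open>L_n^(n+1)\<close>; only the extra instances
  \<open>ip^j\<close> with \<open>j \<ge> n + 1\<close> need work. In any \<open>L_n^k\<close> the axiom \<open>dn\<close> gives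
  \<open>\<circ>\<not>\<alpha> \<leftrightarrow> \<circ>\<alpha>\<close>, and the axioms \<open>ip^j\<close> (\<open>j < k\<close>) propagate this to
  \<open>\<circ>^j \<not>\<alpha> \<leftrightarrow> \<circ>^j \<alpha>\<close> for \<open>1 \<le> j \<le> k\<close>, because by (ciw) and (bc1) two formulas
  whose contradictions are interderivable are equally consistent. For \<open>k = n + 1\<close> and
  \<open>j \<ge> n + 1\<close> the formulas \<open>\<circ>^j \<not>\<alpha>\<close> and \<open>\<circ>^j \<alpha>\<close> are consistent by \<open>cc^n\<close>, and
  between consistent formulas an equivalence can be contraposed, which is \<open>ip^j\<close>.\<close>

lemma circ_pow_add: "circ_pow (i + j) a = circ_pow i (circ_pow j a)"
  by (induction i) auto

lemma derives_mono: "derives n k \<Gamma> a \<Longrightarrow> \<Gamma> \<subseteq> \<Delta> \<Longrightarrow> derives n k \<Delta> a"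
  by (induction rule: derives.induct) (auto intro: derives.intros)

lemma derives_weaken: "derives n k \<Gamma> a \<Longrightarrow> derives n k (insert b \<Gamma>) a"
  by (erule derives_mono) auto

lemma derives_assm: "derives n k (insert a \<Gamma>) a"
  by (rule derives.hyp) simp

lemma derives_mbCciw_ax: "mbCciw_ax a \<Longrightarrow> derives n k \<Gamma> a"
  by (intro derives.ax L_ax.base)

lemma derives_pos_ax: "pos_ax a \<Longrightarrow> derives n k \<Gamma> a"
  by (intro derives_mbCciw_ax mbCciw_ax.pos)

lemma derives_MP: "derives n k \<Gamma> (Imp a b) \<Longrightarrow> derives n k \<Gamma> a \<Longrightarrow> derives n k \<Gamma> b"
  by (rule derives.mp)

lemma derives_Imp_refl: "derives n k \<Gamma> (Imp a a)"
proof -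
  have "derives n k \<Gamma> (Imp (Imp a (Imp a a)) (Imp (Imp a (Imp (Imp a a) a)) (Imp a a)))"
    and "derives n k \<Gamma> (Imp a (Imp a a))"
    and "derives n k \<Gamma> (Imp a (Imp (Imp a a) a))"
    by (intro derives_pos_ax pos_ax.intros)+
  then show ?thesis
    by (blast intro: derives_MP)
qed

lemma derives_ImpI: "derives n k (insert a \<Gamma>) b \<Longrightarrow> derives n k \<Gamma> (Imp a b)"
proof (induction n k "insert a \<Gamma>" b rule: derives.induct)
  case (hyp b n k)
  show ?case
  proof (cases "b = a")
    case True
    then show ?thesis by (simp add: derives_Imp_refl)
  next
    case False
    with hyp have "derives n k \<Gamma> b" by (auto intro: derives.hyp)
    then show ?thesis by (rule derives_MP[OF derives_pos_ax[OF pos_ax.Ax1]])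
  qed
next
  case (ax n k b)
  then show ?case by (rule derives_MP[OF derives_pos_ax[OF pos_ax.Ax1] derives.ax])
next
  case (mp n k b c)
  then show ?case using derives_MP[OF derives_MP[OF derives_pos_ax[OF pos_ax.Ax2]]] by blast
qed

lemma derives_ImpE: "derives n k \<Gamma> (Imp a b) \<Longrightarrow> derives n k (insert a \<Gamma>) b"
  by (rule derives_MP[OF derives_weaken derives_assm])

lemma derives_ConjI:
  "derives n k \<Gamma> a \<Longrightarrow> derives n k \<Gamma> b \<Longrightarrow> derives n k \<Gamma> (Conj a b)"
  by (rule derives_MP[OF derives_MP[OF derives_pos_ax[OF pos_ax.Ax3]]])

lemma derives_ConjD1: "derives n k \<Gamma> (Conj a b) \<Longrightarrow> derives n k \<Gamma> a"
  by (rule derives_MP[OF derives_pos_ax[OF pos_ax.Ax4]])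

lemma derives_ConjD2: "derives n k \<Gamma> (Conj a b) \<Longrightarrow> derives n k \<Gamma> b"
  by (rule derives_MP[OF derives_pos_ax[OF pos_ax.Ax5]])

lemma derives_IffI:
  "derives n k \<Gamma> (Imp a b) \<Longrightarrow> derives n k \<Gamma> (Imp b a) \<Longrightarrow> derives n k \<Gamma> (Iff a b)"
  unfolding Iff_def by (rule derives_ConjI)

lemma derives_IffD1: "derives n k \<Gamma> (Iff a b) \<Longrightarrow> derives n k \<Gamma> (Imp a b)"
  unfolding Iff_def by (rule derives_ConjD1)

lemma derives_IffD2: "derives n k \<Gamma> (Iff a b) \<Longrightarrow> derives n k \<Gamma> (Imp b a)"
  unfolding Iff_def by (rule derives_ConjD2)

lemma derives_DisjE:
  assumes "derives n k \<Gamma> (Disj a b)"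
    and "derives n k (insert a \<Gamma>) c" and "derives n k (insert b \<Gamma>) c"
  shows "derives n k \<Gamma> c"
  using derives_MP[OF derives_MP[OF derives_MP[OF derives_pos_ax[OF pos_ax.Ax8]]]]
    assms derives_ImpI by blast

lemma derives_explosion:
  "derives n k \<Gamma> (Circ a) \<Longrightarrow> derives n k \<Gamma> a \<Longrightarrow> derives n k \<Gamma> (Neg a) \<Longrightarrow> derives n k \<Gamma> b"
  by (rule derives_MP[OF derives_MP[OF derives_MP[OF derives_mbCciw_ax[OF mbCciw_ax.bc1]]]])

text \<open>By (ciw), \<open>b\<close> is either consistent or contradictory, and in the latter case the
  contradiction on \<open>a\<close> explodes against \<open>\<circ>a\<close> by (bc1).\<close>

lemma derives_Circ_transfer:
  assumes "derives n k (insert b (insert (Neg b) \<Gamma>)) a"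
    and "derives n k (insert b (insert (Neg b) \<Gamma>)) (Neg a)"
  shows "derives n k \<Gamma> (Imp (Circ a) (Circ b))"
proof (rule derives_ImpI)
  let ?\<Delta> = "insert (Circ a) \<Gamma>"
  have "derives n k ?\<Delta> (Disj (Circ b) (Conj b (Neg b)))"
    by (intro derives_mbCciw_ax mbCciw_ax.ciw)
  then show "derives n k ?\<Delta> (Circ b)"
  proof (rule derives_DisjE)
    show "derives n k (insert (Circ b) ?\<Delta>) (Circ b)"
      by (rule derives_assm)
  next
    let ?\<Theta> = "insert (Conj b (Neg b)) ?\<Delta>"
    have b: "derives n k ?\<Theta> b" and nb: "derives n k ?\<Theta> (Neg b)"
      by (auto intro: derives_ConjD1 derives_ConjD2 derives_assm)
    have "derives n k ?\<Theta> (Imp (Neg b) (Imp b c))"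
      if "derives n k (insert b (insert (Neg b) \<Gamma>)) c" for c
      using derives_ImpI[OF derives_ImpI[OF that]] by (rule derives_mono) auto
    then have "derives n k ?\<Theta> a" and "derives n k ?\<Theta> (Neg a)"
      using assms derives_MP[OF derives_MP[OF _ nb] b] by blast+
    moreover have "derives n k ?\<Theta> (Circ a)"
      by (auto intro: derives.hyp)
    ultimately show "derives n k ?\<Theta> (Circ b)"
      by (rule derives_explosion[rotated])
  qed
qed

lemma derives_Circ_cong:
  assumes "derives n k \<Gamma> (Iff a b)" and "derives n k \<Gamma> (Iff (Neg a) (Neg b))"
  shows "derives n k \<Gamma> (Iff (Circ a) (Circ b))"
proof (rule derives_IffI)
  let ?\<Delta> = "\<lambda>c. insert c (insert (Neg c) \<Gamma>)"
  have "derives n k (?\<Delta> b) a"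
    using derives_ImpE[OF derives_IffD2[OF assms(1)]] by (rule derives_mono) auto
  moreover have "derives n k (?\<Delta> b) (Neg a)"
    using derives_ImpE[OF derives_IffD2[OF assms(2)]] by (rule derives_mono) auto
  ultimately show "derives n k \<Gamma> (Imp (Circ a) (Circ b))"
    by (rule derives_Circ_transfer)
  have "derives n k (?\<Delta> a) b"
    using derives_ImpE[OF derives_IffD1[OF assms(1)]] by (rule derives_mono) auto
  moreover have "derives n k (?\<Delta> a) (Neg b)"
    using derives_ImpE[OF derives_IffD1[OF assms(2)]] by (rule derives_mono) auto
  ultimately show "derives n k \<Gamma> (Imp (Circ b) (Circ a))"
    by (rule derives_Circ_transfer)
qed

lemma derives_contrapos_Circ:
  assumes "derives n k \<Gamma> (Imp a b)" and "derives n k \<Gamma> (Circ b)"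
  shows "derives n k \<Gamma> (Imp (Neg b) (Neg a))"
proof (rule derives_ImpI)
  have "derives n k (insert (Neg b) \<Gamma>) (Disj a (Neg a))"
    by (intro derives_mbCciw_ax mbCciw_ax.TND)
  then show "derives n k (insert (Neg b) \<Gamma>) (Neg a)"
  proof (rule derives_DisjE)
    let ?\<Delta> = "insert a (insert (Neg b) \<Gamma>)"
    have "derives n k ?\<Delta> b" and "derives n k ?\<Delta> (Neg b)" and "derives n k ?\<Delta> (Circ b)"
      using assms by (auto intro: derives.hyp derives_ImpE derives_mono)
    then show "derives n k ?\<Delta> (Neg a)"
      by (rule derives_explosion[rotated])
  qed (rule derives_assm)
qed

lemma derives_Neg_cong_Circ:
  assumes "derives n k \<Gamma> (Iff a b)"
    and "derives n k \<Gamma> (Circ a)" and "derives n k \<Gamma> (Circ b)"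
  shows "derives n k \<Gamma> (Iff (Neg a) (Neg b))"
  using derives_contrapos_Circ[OF derives_IffD2[OF assms(1)] assms(2)]
    derives_contrapos_Circ[OF derives_IffD1[OF assms(1)] assms(3)]
  by (rule derives_IffI)

lemma derives_Circ_Neg_iff: "derives n k \<Gamma> (Iff (Circ (Neg a)) (Circ a))"
proof (rule derives_IffI)
  have dn: "derives n k \<Gamma> (Iff (Neg (Neg a)) a)"
    by (intro derives.ax L_ax.dn)
  have "derives n k (insert a (insert (Neg a) \<Gamma>)) (Neg (Neg a))"
    using derives_ImpE[OF derives_IffD2[OF dn]] by (rule derives_mono) auto
  with derives_weaken[OF derives_assm]
  show "derives n k \<Gamma> (Imp (Circ (Neg a)) (Circ a))"
    by (rule derives_Circ_transfer)
  have "derives n k (insert (Neg a) (insert (Neg (Neg a)) \<Gamma>)) a"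
    using derives_ImpE[OF derives_IffD1[OF dn]] by (rule derives_mono) auto
  then show "derives n k \<Gamma> (Imp (Circ a) (Circ (Neg a)))"
    using derives_assm by (rule derives_Circ_transfer)
qed

lemma derives_circ_pow_Neg_iff:
  assumes "1 \<le> i" and "i \<le> k"
  shows "derives n k \<Gamma> (Iff (circ_pow i (Neg a)) (circ_pow i a))"
  using assms
proof (induction i rule: nat_induct_at_least)
  case base
  then show ?case by (simp add: derives_Circ_Neg_iff)
next
  case (Suc i)
  have "derives n k \<Gamma> (Iff (Neg (circ_pow i (Neg a))) (Neg (circ_pow i a)))"
    using Suc by (intro derives.ax L_ax.ip) auto
  with Suc show ?case
    by (simp add: derives_Circ_cong)
qed

lemma derives_circ_pow_cc:
  assumes "n + 2 \<le> j"
  shows "derives n k \<Gamma> (circ_pow j a)"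
proof -
  have "circ_pow j a = circ_pow (n + 2) (circ_pow (j - (n + 2)) a)"
    using assms by (simp only: circ_pow_add[symmetric] le_add_diff_inverse)
  then show ?thesis
    using derives.ax[OF L_ax.cc] by metis
qed

lemma derives_ip_from_cc:
  assumes "n + 1 \<le> j"
  shows "derives n (n + 1) \<Gamma> (Iff (Neg (circ_pow j (Neg a))) (Neg (circ_pow j a)))"
proof -
  have consistent: "derives n (n + 1) \<Gamma> (Circ (circ_pow j b))" for b
    using derives_circ_pow_cc[of n "Suc j"] assms by simp
  have "derives n (n + 1) \<Gamma> (Iff (circ_pow j (Neg a)) (circ_pow j a))"
  proof (cases "j = n + 1")
    case True
    then show ?thesis using derives_circ_pow_Neg_iff[of j "n + 1"] by simp
  next
    case False
    then have "derives n (n + 1) \<Gamma> (circ_pow j b)" for b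
      using assms by (simp add: derives_circ_pow_cc)
    then show ?thesis
      by (intro derives_IffI derives_ImpI derives_weaken)
  qed
  then show ?thesis
    using consistent consistent by (rule derives_Neg_cong_Circ)
qed

lemma derives_Suc_level_L_ax: "L_ax n k a \<Longrightarrow> derives n (n + 1) \<Gamma> a"
proof (induction rule: L_ax.induct)
  case (ip j k n a)
  show ?case
  proof (cases "j < n + 1")
    case True
    with ip show ?thesis by (intro derives.ax L_ax.ip)
  next
    case False
    then show ?thesis by (intro derives_ip_from_cc) simp
  qed
qed (intro derives.ax L_ax.intros; assumption)+

lemma L_ax_ip_mono: "L_ax n k a \<Longrightarrow> k \<le> m \<Longrightarrow> L_ax n m a"
proof (induction rule: L_ax.induct)
  case (ip j k n a)
  then show ?case by (simp add: L_ax.ip)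
qed (intro L_ax.intros; assumption)+

lemma derives_by_derivable_axioms:
  "derives n k \<Gamma> a \<Longrightarrow> (\<And>b. L_ax n k b \<Longrightarrow> derives n m \<Gamma> b) \<Longrightarrow> derives n m \<Gamma> a"
proof (induction rule: derives.induct)
  case hyp
  then show ?case by (simp add: derives.hyp)
next
  case ax
  then show ?case by blast
next
  case (mp n k \<Gamma> a b)
  then have "derives n m \<Gamma> a" and "derives n m \<Gamma> (Imp a b)"
    by blast+
  then show ?case by (rule derives.mp)
qed

theorem theorem28:
  fixes n m :: nat
  assumes "m \<ge> n + 2"
  shows "\<forall>\<Gamma> \<alpha>. derives n (n + 1) \<Gamma> \<alpha> \<longleftrightarrow> derives n m \<Gamma> \<alpha>"
proof (intro allI iffI)
  fix \<Gamma> \<alpha>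
  have "n + 1 \<le> m"
    using assms by simp
  then show "derives n m \<Gamma> \<alpha>" if "derives n (n + 1) \<Gamma> \<alpha>"
    using that by (auto intro: derives_by_derivable_axioms derives.ax L_ax_ip_mono)
  show "derives n (n + 1) \<Gamma> \<alpha>" if "derives n m \<Gamma> \<alpha>"
    using that by (rule derives_by_derivable_axioms) (rule derives_Suc_level_L_ax)
qed

end
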